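(* Let $N\ge 2$, let $\mathbf{K}\in\mathbb{R}^{N\times N}$ be the cyclic shift matrix ($(\mathbf{K}\mathbf{x})_1=x_N$, $(\mathbf{K}\mathbf{x})_i=x_{i-1}$ for $i\ge2$), $\mathbf{K}(\omega)=(1-\omega)\mathbf{I}+\omega\mathbf{K}$, $\mathbf{D}=\mathbf{K}-\mathbf{I}$ and $\mathbf{L}=\mathbf{K}+\mathbf{K}^T-2\mathbf{I}$. Suppose $\mathbf{a},\mathbf{b}\in\mathbb{R}^N$ are non-constant vectors. If $\nu=\operatorname{argmin}_{\omega\in\mathbb{R}}\|\mathbf{b}-\mathbf{K}(\omega)^T\mathbf{a}\|_2^2$, then $$\nu=\frac12\left(1-2\,\frac{\mathbf{a}^T\mathbf{D}\mathbf{b}}{\mathbf{a}^T\mathbf{L}\mathbf{a}}\right).$$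
   Context: A vector is constant if all its entries are equal. $\|\cdot\|_2$ is the Euclidean norm. *)

theory Defs
  imports Complex_Main
begin

(* Vectors in R^N are functions nat => real, only indices 0..N-1 matter (0-based).
   N x N matrices are functions nat => nat => real, only indices < N matter. *)

definition mat_vec :: "nat \<Rightarrow> (nat \<Rightarrow> nat \<Rightarrow> real) \<Rightarrow> (nat \<Rightarrow> real) \<Rightarrow> nat \<Rightarrow> real" where
  "mat_vec N M x = (\<lambda>i. \<Sum>j<N. M i j * x j)"

definition dotN :: "nat \<Rightarrow> (nat \<Rightarrow> real) \<Rightarrow> (nat \<Rightarrow> real) \<Rightarrow> real" where
  "dotN N x y = (\<Sum>i<N. x i * y i)"

definition norm2sq :: "nat \<Rightarrow> (nat \<Rightarrow> real) \<Rightarrow> real" where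
  "norm2sq N x = dotN N x x"

definition idm :: "nat \<Rightarrow> nat \<Rightarrow> real" where
  "idm i j = (if i = j then 1 else 0)"

definition mtrans :: "(nat \<Rightarrow> nat \<Rightarrow> real) \<Rightarrow> nat \<Rightarrow> nat \<Rightarrow> real" where
  "mtrans M = (\<lambda>i j. M j i)"

(* cyclic shift: (K x)_0 = x_(N-1), (K x)_i = x_(i-1) for i >= 1 *)
definition shiftK :: "nat \<Rightarrow> nat \<Rightarrow> nat \<Rightarrow> real" where
  "shiftK N i j = (if j = (i + N - 1) mod N then 1 else 0)"

definition Komega :: "nat \<Rightarrow> real \<Rightarrow> nat \<Rightarrow> nat \<Rightarrow> real" where
  "Komega N \<omega> i j = (1 - \<omega>) * idm i j + \<omega> * shiftK N i j"

definition Dmat :: "nat \<Rightarrow> nat \<Rightarrow> nat \<Rightarrow> real" where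
  "Dmat N i j = shiftK N i j - idm i j"

definition Lmat :: "nat \<Rightarrow> nat \<Rightarrow> nat \<Rightarrow> real" where
  "Lmat N i j = shiftK N i j + mtrans (shiftK N) i j - 2 * idm i j"

definition const_vec :: "nat \<Rightarrow> (nat \<Rightarrow> real) \<Rightarrow> bool" where
  "const_vec N x \<longleftrightarrow> (\<forall>i<N. \<forall>j<N. x i = x j)"

end

theory Submission imports Defs begin

text \<open>Writing \<open>c = K\<^sup>T a - a\<close> for the cyclic forward difference of \<open>a\<close>, the residual is
  \<open>b - K(\<omega>)\<^sup>T a = (b - a) - \<omega> c\<close>, so the objective is the quadratic
  \<open>\<parallel>c\<parallel>\<^sup>2 \<omega>\<^sup>2 - 2 \<langle>c, b - a\<rangle> \<omega> + \<parallel>b - a\<parallel>\<^sup>2\<close> with positive leading coefficient (as \<open>a\<close> is not constant),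
  minimised exactly at \<open>\<langle>c, b - a\<rangle> / \<parallel>c\<parallel>\<^sup>2\<close>. Summation by parts around the cycle gives
  \<open>\<langle>c, y\<rangle> = a\<^sup>T D y\<close> and \<open>\<langle>c, a\<rangle> = -\<parallel>c\<parallel>\<^sup>2/2 = a\<^sup>T L a / 2\<close>, which turns this quotient into the claimed formula.\<close>

definition cyc_succ :: "nat \<Rightarrow> nat \<Rightarrow> nat" where
  "cyc_succ N i = Suc i mod N"

definition cyc_pred :: "nat \<Rightarrow> nat \<Rightarrow> nat" where
  "cyc_pred N i = (i + N - 1) mod N"

definition fwd_diff :: "nat \<Rightarrow> (nat \<Rightarrow> real) \<Rightarrow> nat \<Rightarrow> real" where
  "fwd_diff N x i = x (cyc_succ N i) - x i"

lemma cyc_succ_less: "0 < N \<Longrightarrow> cyc_succ N i < N"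
  by (simp add: cyc_succ_def)

lemma cyc_pred_less: "0 < N \<Longrightarrow> cyc_pred N i < N"
  by (simp add: cyc_pred_def)

lemma cyc_pred_succ: "i < N \<Longrightarrow> cyc_pred N (cyc_succ N i) = i"
proof (cases "Suc i < N")
  case True
  then show ?thesis by (simp add: cyc_succ_def cyc_pred_def)
next
  case False
  moreover assume "i < N"
  ultimately have "Suc i = N" by simp
  then show ?thesis by (simp add: cyc_succ_def cyc_pred_def)
qed

lemma cyc_succ_pred: "i < N \<Longrightarrow> cyc_succ N (cyc_pred N i) = i"
  unfolding cyc_succ_def cyc_pred_def
  by (metis Suc_diff_1 add_Suc_right add_gr_0 gr_zeroI mod_Suc_eq mod_add_self2 mod_less not_less0)

lemma bij_betw_cyc_succ: "bij_betw (cyc_succ N) {..<N} {..<N}"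
  by (rule bij_betw_byWitness[where f' = "cyc_pred N"])
     (auto simp: cyc_pred_succ cyc_succ_pred cyc_succ_less cyc_pred_less)

lemma sum_cyc_succ: "(\<Sum>i<N. g (cyc_succ N i)) = (\<Sum>i<N. g i :: real)"
  using sum.reindex_bij_betw[OF bij_betw_cyc_succ, of g] by simp

lemma sum_cyc_pred_shift: "(\<Sum>i<N. x i * y (cyc_pred N i)) = (\<Sum>i<N. x (cyc_succ N i) * y i :: real)"
proof -
  have "(\<Sum>i<N. x (cyc_succ N i) * y i) = (\<Sum>i<N. x (cyc_succ N i) * y (cyc_pred N (cyc_succ N i)))"
    by (rule sum.cong) (simp_all add: cyc_pred_succ)
  also have "\<dots> = (\<Sum>i<N. x i * y (cyc_pred N i))"
    by (rule sum_cyc_succ)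
  finally show ?thesis by simp
qed

lemma mat_vec_idm: "i < N \<Longrightarrow> mat_vec N idm x i = x i"
  unfolding mat_vec_def idm_def
  by (simp add: if_distrib[where f = "\<lambda>c. c * _"] sum.delta cong: if_cong)

lemma mat_vec_shiftK: "0 < N \<Longrightarrow> mat_vec N (shiftK N) x i = x (cyc_pred N i)"
  unfolding mat_vec_def shiftK_def cyc_pred_def
  by (simp add: if_distrib[where f = "\<lambda>c. c * _"] sum.delta cong: if_cong)

lemma mat_vec_shiftK_transpose:
  assumes "i < N"
  shows "mat_vec N (mtrans (shiftK N)) x i = x (cyc_succ N i)"
proof -
  have "mat_vec N (mtrans (shiftK N)) x i = (\<Sum>j<N. if j = cyc_succ N i then x j else 0)"
    unfolding mat_vec_def mtrans_def shiftK_def cyc_pred_def[symmetric]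
    using assms by (intro sum.cong) (auto simp: cyc_pred_succ cyc_succ_pred)
  also have "\<dots> = x (cyc_succ N i)"
    using assms by (simp add: sum.delta cyc_succ_less)
  finally show ?thesis .
qed

lemma mat_vec_Komega_transpose:
  assumes "i < N"
  shows "mat_vec N (mtrans (Komega N \<omega>)) x i = x i + \<omega> * fwd_diff N x i"
proof -
  have "mat_vec N (mtrans (Komega N \<omega>)) x i
      = (1 - \<omega>) * mat_vec N idm x i + \<omega> * mat_vec N (mtrans (shiftK N)) x i"
    unfolding mat_vec_def mtrans_def Komega_def
    by (auto simp: sum_distrib_left sum.distrib[symmetric] algebra_simps idm_def intro!: sum.cong)
  then show ?thesis
    using assms by (simp add: mat_vec_idm mat_vec_shiftK_transpose fwd_diff_def algebra_simps)
qed

lemma dotN_Dmat: "0 < N \<Longrightarrow> dotN N x (mat_vec N (Dmat N) y) = dotN N (fwd_diff N x) y"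
proof -
  assume N: "0 < N"
  have "dotN N x (mat_vec N (Dmat N) y) = (\<Sum>i<N. x i * y (cyc_pred N i) - x i * y i)"
    unfolding dotN_def
  proof (rule sum.cong)
    fix i assume "i \<in> {..<N}"
    then have "mat_vec N (Dmat N) y i = y (cyc_pred N i) - y i"
      using N unfolding Dmat_def mat_vec_def
      by (simp add: left_diff_distrib sum_subtractf mat_vec_shiftK[unfolded mat_vec_def]
                    mat_vec_idm[unfolded mat_vec_def])
    then show "x i * mat_vec N (Dmat N) y i = x i * y (cyc_pred N i) - x i * y i"
      by (simp add: right_diff_distrib)
  qed simp
  then show ?thesis
    by (simp add: sum_subtractf sum_cyc_pred_shift dotN_def fwd_diff_def left_diff_distrib)
qed

lemma dotN_fwd_diff_self: "dotN N (fwd_diff N x) x = - norm2sq N (fwd_diff N x) / 2"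
proof -
  have "(\<Sum>i<N. x (cyc_succ N i) * x (cyc_succ N i)) = (\<Sum>i<N. x i * x i)"
    by (rule sum_cyc_succ)
  then show ?thesis
    unfolding norm2sq_def dotN_def fwd_diff_def
    by (simp add: algebra_simps sum.distrib sum_subtractf sum_distrib_left)
qed

lemma dotN_Lmat: "0 < N \<Longrightarrow> dotN N x (mat_vec N (Lmat N) x) = - norm2sq N (fwd_diff N x)"
proof -
  assume N: "0 < N"
  have "mat_vec N (Lmat N) x i = mat_vec N (Dmat N) x i + (x (cyc_succ N i) - x i)" if "i < N" for i
    using that N unfolding Lmat_def Dmat_def
    by (simp add: mat_vec_def sum.distrib sum_subtractf left_diff_distrib distrib_right mult.assoc
                  sum_distrib_left[symmetric] mat_vec_shiftK_transpose[unfolded mat_vec_def]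
                  mat_vec_idm[unfolded mat_vec_def])
  then have "dotN N x (mat_vec N (Lmat N) x) = dotN N x (mat_vec N (Dmat N) x) + dotN N (fwd_diff N x) x"
    unfolding dotN_def fwd_diff_def by (simp add: distrib_left sum.distrib mult.commute)
  then show ?thesis
    using N by (simp add: dotN_Dmat dotN_fwd_diff_self)
qed

lemma norm2sq_fwd_diff_pos:
  assumes "\<not> const_vec N x"
  shows "norm2sq N (fwd_diff N x) > 0"
proof -
  have "\<exists>i<N. fwd_diff N x i \<noteq> 0"
  proof (rule ccontr)
    assume "\<not> ?thesis"
    then have step: "x (Suc i mod N) = x i" if "i < N" for i
      using that by (auto simp: fwd_diff_def cyc_succ_def)
    have "x i = x 0" if "i < N" for i
      using that
    proof (induction i)
      case (Suc i)
      then show ?case using step[of i] by simp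
    qed simp
    then show False
      using assms unfolding const_vec_def by metis
  qed
  then obtain i where i: "i < N" "fwd_diff N x i \<noteq> 0" by blast
  have "0 < fwd_diff N x i * fwd_diff N x i"
    using i(2) by (auto simp: zero_less_mult_iff linorder_neq_iff)
  also have "\<dots> \<le> norm2sq N (fwd_diff N x)"
    unfolding norm2sq_def dotN_def by (rule member_le_sum) (use i(1) in auto)
  finally show ?thesis .
qed

lemma norm2sq_diff_scaled:
  "norm2sq N (\<lambda>i. d i - \<omega> * c i) = norm2sq N c * \<omega>\<^sup>2 - 2 * dotN N c d * \<omega> + norm2sq N d"
  unfolding norm2sq_def dotN_def
  by (simp add: power2_eq_square algebra_simps sum.distrib sum_subtractf sum_distrib_left)

lemma is_arg_min_quadratic:
  fixes A B C \<nu> :: real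
  assumes "A > 0" and "is_arg_min (\<lambda>\<omega>. A * \<omega>\<^sup>2 - 2 * B * \<omega> + C) (\<lambda>_. True) \<nu>"
  shows "\<nu> = B / A"
proof -
  have "A * \<nu>\<^sup>2 - 2 * B * \<nu> + C \<le> A * (B / A)\<^sup>2 - 2 * B * (B / A) + C"
    using assms(2) unfolding is_arg_min_def by (metis not_less)
  moreover have "A * \<nu>\<^sup>2 - 2 * B * \<nu> + C = A * (\<nu> - B / A)\<^sup>2 + (A * (B / A)\<^sup>2 - 2 * B * (B / A) + C)"
    using assms(1) by (simp add: power2_eq_square field_simps)
  ultimately have "A * (\<nu> - B / A)\<^sup>2 \<le> 0" by linarith
  then show ?thesis
    using assms(1) by (simp add: mult_le_0_iff)
qed

theorem lemma3p4:
  fixes N :: nat and a b :: "nat \<Rightarrow> real" and \<nu> :: real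
  assumes "N \<ge> 2"
    and "\<not> const_vec N a" and "\<not> const_vec N b"
    and "is_arg_min (\<lambda>\<omega>. norm2sq N (\<lambda>i. b i - mat_vec N (mtrans (Komega N \<omega>)) a i))
                    (\<lambda>_. True) \<nu>"
  shows "\<nu> = 1/2 * (1 - 2 * dotN N a (mat_vec N (Dmat N) b) / dotN N a (mat_vec N (Lmat N) a))"
proof -
  have N: "0 < N" using assms(1) by simp
  define c where "c = fwd_diff N a"
  define d where "d i = b i - a i" for i
  have pos: "norm2sq N c > 0"
    unfolding c_def using assms(2) by (rule norm2sq_fwd_diff_pos)
  have "norm2sq N (\<lambda>i. b i - mat_vec N (mtrans (Komega N \<omega>)) a i) = norm2sq N (\<lambda>i. d i - \<omega> * c i)" for \<omega>
    unfolding norm2sq_def dotN_def c_def d_def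
    by (intro sum.cong) (simp_all add: mat_vec_Komega_transpose algebra_simps)
  then have "\<nu> = dotN N c d / norm2sq N c"
    using assms(4) pos by (intro is_arg_min_quadratic) (simp_all add: norm2sq_diff_scaled)
  moreover have "dotN N c d = dotN N a (mat_vec N (Dmat N) b) + norm2sq N c / 2"
    unfolding d_def c_def dotN_Dmat[OF N]
    using dotN_fwd_diff_self[of N a] by (simp add: dotN_def right_diff_distrib sum_subtractf)
  ultimately show ?thesis
    using pos by (simp add: dotN_Lmat[OF N] c_def[symmetric] field_simps)
qed

end
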